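(* Let $S$ be an entropy function for a finite set $X$, let $X'\subset X$, let $S'$ be the restriction of $S$ to subsets of $X'$, and let $f'$ be an EDF for $S'$. Then there exists an EDF $f$ for $S$ with $f(x)=f'(x)$ for all $x\in X'$.
   Context: An entropy function for a finite set $X$ is a function $S:2^X\to[0,\infty)$ with $S(\emptyset)=0$, $S(A)+S(B)\ge S(A\cap B)+S(A\cup B)$ and $S(A)+S(B)\ge S(A\setminus B)+S(B\setminus A)$ for all $A,B\subseteq X$. An entanglement distribution function (EDF) for $S$ is a function $f:X\to\mathbb R$ with $\big|\sum_{x\in A}f(x)\big|\le S(A)$ for all $A\subseteq X$. The restriction $S'$ of $S$ to $2^{X'}$ is an entropy function for $X'$. *)

theory Defs
  imports Main "HOL-Library.Multiset" Complex_Main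
begin

definition entropy_function :: "'a set \<Rightarrow> ('a set \<Rightarrow> real) \<Rightarrow> bool" where
  "entropy_function X S \<longleftrightarrow> finite X \<and>
     (\<forall>A. A \<subseteq> X \<longrightarrow> S A \<ge> 0) \<and> S {} = 0 \<and>
     (\<forall>A B. A \<subseteq> X \<longrightarrow> B \<subseteq> X \<longrightarrow> S A + S B \<ge> S (A \<inter> B) + S (A \<union> B)) \<and>
     (\<forall>A B. A \<subseteq> X \<longrightarrow> B \<subseteq> X \<longrightarrow> S A + S B \<ge> S (A - B) + S (B - A))"

definition restrict_entropy :: "'a set \<Rightarrow> ('a set \<Rightarrow> real) \<Rightarrow> ('a set \<Rightarrow> real)" where
  "restrict_entropy X' S = (\<lambda>A. if A \<subseteq> X' then S A else 0)"

definition is_EDF :: "'a set \<Rightarrow> ('a set \<Rightarrow> real) \<Rightarrow> ('a \<Rightarrow> real) \<Rightarrow> bool" where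
  "is_EDF X S f \<longleftrightarrow> (\<forall>A. A \<subseteq> X \<longrightarrow> \<bar>\<Sum>x\<in>A. f x\<bar> \<le> S A)"

end

theory Submission
  imports Defs
begin

text \<open>Only the second entropy inequality (weak monotonicity) is needed. An EDF is extended
  one point at a time: a new value \<open>t\<close> at \<open>y\<close> must satisfy
  \<open>-S (insert y B) - g B \<le> t \<le> S (insert y C) - g C\<close> for all old sets \<open>B\<close>, \<open>C\<close>, and
  every lower bound lies below every upper bound because weak monotonicity for
  \<open>insert y B\<close>, \<open>insert y C\<close> gives \<open>S (B - C) + S (C - B) \<le> S (insert y B) + S (insert y C)\<close>,
  while the EDF bounds on \<open>B - C\<close> and \<open>C - B\<close> control \<open>g B - g C\<close>.\<close>

definition weakly_monotone_on :: "'a set \<Rightarrow> ('a set \<Rightarrow> real) \<Rightarrow> bool" where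
  "weakly_monotone_on X S \<longleftrightarrow>
     (\<forall>A B. A \<subseteq> X \<longrightarrow> B \<subseteq> X \<longrightarrow> S (A - B) + S (B - A) \<le> S A + S B)"

lemma entropy_function_weakly_monotone_on:
  "entropy_function X S \<Longrightarrow> weakly_monotone_on X S"
  unfolding entropy_function_def weakly_monotone_on_def by blast

lemma weakly_monotone_on_subset:
  "weakly_monotone_on X S \<Longrightarrow> Y \<subseteq> X \<Longrightarrow> weakly_monotone_on Y S"
  unfolding weakly_monotone_on_def by (meson order_trans)

lemma is_EDF_restrict_entropy_iff:
  "is_EDF X (restrict_entropy X S) f \<longleftrightarrow> is_EDF X S f"
  unfolding is_EDF_def restrict_entropy_def by auto

lemma EDF_lower_bound_le_upper_bound:
  assumes "finite Y" "y \<notin> Y" "weakly_monotone_on (insert y Y) S" "is_EDF Y S g"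
    and B: "B \<subseteq> Y" and C: "C \<subseteq> Y"
  shows "- S (insert y B) - sum g B \<le> S (insert y C) - sum g C"
proof -
  have fin: "finite B" "finite C"
    using finite_subset[OF B] finite_subset[OF C] \<open>finite Y\<close> by simp_all
  have "S (B - C) + S (C - B) \<le> S (insert y B) + S (insert y C)"
  proof -
    have "insert y B \<subseteq> insert y Y" "insert y C \<subseteq> insert y Y"
      using B C by auto
    then have "S (insert y B - insert y C) + S (insert y C - insert y B)
        \<le> S (insert y B) + S (insert y C)"
      by (rule \<open>weakly_monotone_on (insert y Y) S\<close>[unfolded weakly_monotone_on_def, rule_format])
    moreover have "insert y B - insert y C = B - C" "insert y C - insert y B = C - B"
      using B C \<open>y \<notin> Y\<close> by auto
    ultimately show ?thesis by simp
  qed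
  moreover have "\<bar>sum g (B - C)\<bar> \<le> S (B - C)" "\<bar>sum g (C - B)\<bar> \<le> S (C - B)"
    using \<open>is_EDF Y S g\<close> B C unfolding is_EDF_def by (simp_all add: subset_iff)
  moreover have "sum g B = sum g (B - C) + sum g (B \<inter> C)"
    using sum.Int_Diff[of B g C] fin by simp
  moreover have "sum g C = sum g (C - B) + sum g (B \<inter> C)"
    using sum.Int_Diff[of C g B] fin by (simp add: Int_commute)
  ultimately show ?thesis by (simp add: abs_le_iff)
qed

lemma is_EDF_extend_insert:
  assumes "finite Y" "y \<notin> Y" "weakly_monotone_on (insert y Y) S" "is_EDF Y S g"
  shows "\<exists>t. is_EDF (insert y Y) S (g(y := t))"
proof -
  define lower where "lower = (\<lambda>B. - S (insert y B) - sum g B) ` Pow Y"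
  have lower: "finite lower" "lower \<noteq> {}"
    using \<open>finite Y\<close> by (auto simp: lower_def)
  define t where "t = Max lower"
  have t_ge: "- S (insert y B) - sum g B \<le> t" if "B \<subseteq> Y" for B
    unfolding t_def using lower that by (intro Max_ge) (auto simp: lower_def)
  have t_le: "t \<le> S (insert y C) - sum g C" if "C \<subseteq> Y" for C
    unfolding t_def
  proof (rule Max.boundedI[OF lower])
    fix m assume "m \<in> lower"
    then obtain B where "B \<subseteq> Y" "m = - S (insert y B) - sum g B"
      by (auto simp: lower_def)
    then show "m \<le> S (insert y C) - sum g C"
      using EDF_lower_bound_le_upper_bound[OF assms _ that] by simp
  qed
  have "\<bar>sum (g(y := t)) A\<bar> \<le> S A" if A: "A \<subseteq> insert y Y" for A
  proof (cases "y \<in> A")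
    case True
    define B where "B = A - {y}"
    have B: "B \<subseteq> Y" "y \<notin> B" "A = insert y B"
      using A True by (auto simp: B_def)
    have "sum (g(y := t)) A = t + sum g B"
      using B finite_subset[OF B(1) \<open>finite Y\<close>]
      by (simp add: sum.insert_if) (rule sum.cong, auto)
    then show ?thesis
      using t_ge[OF B(1)] t_le[OF B(1)] B(3) by auto
  next
    case False
    then have "A \<subseteq> Y" "sum (g(y := t)) A = sum g A"
      using A by (auto intro: sum.cong)
    then show ?thesis
      using \<open>is_EDF Y S g\<close> unfolding is_EDF_def by auto
  qed
  then show ?thesis
    unfolding is_EDF_def by blast
qed

lemma is_EDF_extend_union:
  assumes "finite D" "finite Y" "weakly_monotone_on (Y \<union> D) S" "is_EDF Y S g"
  shows "\<exists>f. is_EDF (Y \<union> D) S f \<and> (\<forall>x\<in>Y. f x = g x)"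
  using assms
proof (induction D rule: finite_induct)
  case empty
  then show ?case by auto
next
  case (insert y D)
  have "weakly_monotone_on (Y \<union> D) S"
    using insert.prems(2) by (rule weakly_monotone_on_subset) auto
  then obtain f where f: "is_EDF (Y \<union> D) S f" "\<forall>x\<in>Y. f x = g x"
    using insert.IH insert.prems by blast
  show ?case
  proof (cases "y \<in> Y")
    case True
    then have "Y \<union> insert y D = Y \<union> D" by auto
    then show ?thesis using f by auto
  next
    case False
    then have "y \<notin> Y \<union> D" using insert.hyps(2) by auto
    moreover have "finite (Y \<union> D)" using insert.hyps(1) insert.prems(1) by simp
    moreover have "Y \<union> insert y D = insert y (Y \<union> D)" by simp
    ultimately obtain t where "is_EDF (Y \<union> insert y D) S (f(y := t))"
      using is_EDF_extend_insert[OF _ _ _ f(1)] insert.prems(2) by auto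
    with f(2) False show ?thesis by auto
  qed
qed

theorem theorem21:
  fixes X X' :: "'a set" and S :: "'a set \<Rightarrow> real" and f' :: "'a \<Rightarrow> real"
  assumes "entropy_function X S"
    and "X' \<subseteq> X"
    and "is_EDF X' (restrict_entropy X' S) f'"
  shows "\<exists>f. is_EDF X S f \<and> (\<forall>x\<in>X'. f x = f' x)"
proof -
  have "finite X"
    using assms(1) unfolding entropy_function_def by blast
  moreover have "finite X'"
    using \<open>finite X\<close> assms(2) by (rule finite_subset[rotated])
  moreover have "X' \<union> (X - X') = X"
    using assms(2) by auto
  moreover have "is_EDF X' S f'"
    using assms(3) by (simp add: is_EDF_restrict_entropy_iff)
  ultimately show ?thesis
    using is_EDF_extend_union[of "X - X'" X' S f']
      entropy_function_weakly_monotone_on[OF assms(1)] by auto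
qed

end
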